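(* Let $G$ be a finite, simple, connected, vertex-transitive $(q+1)$-regular graph with $n$ vertices and $m$ edges, let $a\in[0,1]$ and $b\in\mathbb R$, and set $\eta=(1-q)a+b(q+1)$ and $\sigma=b((1-q)a+bq)$. Then for complex $u$ with $|u|$ sufficiently small (principal branches of logarithms and powers), \[ \zeta_{a,b}(G,u)^{-1}=(1-b^2u^2)^{(q-1)/2}\exp\Big[\frac1n\sum_{\lambda\in\operatorname{Spec}(\mathbf P)}\log\{(1+\sigma u^2)-\eta u\lambda\}\Big] \] and \[ \zeta_{a,b}(G,u)^{-1}=(1-b^2u^2)^{(q-1)/2}\exp\Big[\frac1n\sum_{\lambda\in\operatorname{Spec}(\Delta)}\log\Big\{(1-\eta u+\sigma u^2)+\frac{\eta u}{q+1}\lambda\Big\}\Big], \] where the sums run over the eigenvalues of $\mathbf P=\mathbf P(G)$, respectively of the Laplacian $\Delta=\mathbf D-\mathbf A(G)$, counted with multiplicity.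
   Context: $D(G)$ is the set of $2m$ arcs of $G$ (for each edge $uv$, both $(u,v)$ and $(v,u)$); for $e=(u,v)$, $o(e)=u$, $t(e)=v$, $e^{-1}=(v,u)$. The weight $w:D(G)\times D(G)\to\mathbb C$ is $w(f,e)=(2/\deg t(f)-1)a+b$ if $t(f)=o(e)$ and $f\ne e^{-1}$, $w(f,e)=(2/\deg t(f)-1)a$ if $f=e^{-1}$, and $0$ otherwise. A cycle of length $r$ is a sequence $C=(e_1,\ldots,e_r)$ of arcs with $t(e_i)=o(e_{i+1})$ for $i<r$ and $t(e_r)=o(e_1)$ (backtracking allowed), with $w(C)=w(e_1,e_2)\cdots w(e_{r-1},e_r)w(e_r,e_1)$; it is an $x_0$-cycle if $o(e_1)=x_0$. Fixing a vertex $x_0$, the generalized $(a,b)$-zeta function is $\zeta_{a,b}(G,u)=\exp\big(\sum_{r\ge1}\frac{N^0_r}{r}u^r\big)$ with $N^0_r=\sum\{w(C)\mid C$ an $x_0$-cycle of length $r\}$. $G$ is vertex-transitive if its automorphism group acts transitively on vertices. $\mathbf P(G)$ has entries $P_{uv}=1/\deg u$ if $u,v$ adjacent and $0$ otherwise; $\mathbf D$ is the diagonal degree matrix and $\mathbf A(G)$ the adjacency matrix. *)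

theory Defs
  imports "HOL-Analysis.Analysis" "Jordan_Normal_Form.Char_Poly"
begin

definition simple_graph :: "'a set \<Rightarrow> ('a \<Rightarrow> 'a \<Rightarrow> bool) \<Rightarrow> bool" where
  "simple_graph V E \<longleftrightarrow> finite V \<and> (\<forall>u v. E u v \<longrightarrow> u \<in> V \<and> v \<in> V)
     \<and> (\<forall>u v. E u v \<longrightarrow> E v u) \<and> (\<forall>u. \<not> E u u)"

definition connected_graph :: "'a set \<Rightarrow> ('a \<Rightarrow> 'a \<Rightarrow> bool) \<Rightarrow> bool" where
  "connected_graph V E \<longleftrightarrow> V \<noteq> {} \<and> (\<forall>x\<in>V. \<forall>y\<in>V. E\<^sup>*\<^sup>* x y)"

definition vertex_transitive :: "'a set \<Rightarrow> ('a \<Rightarrow> 'a \<Rightarrow> bool) \<Rightarrow> bool" where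
  "vertex_transitive V E \<longleftrightarrow> (\<forall>x\<in>V. \<forall>y\<in>V. \<exists>f. bij_betw f V V
      \<and> (\<forall>u\<in>V. \<forall>v\<in>V. E u v \<longleftrightarrow> E (f u) (f v)) \<and> f x = y)"

definition deg :: "'a set \<Rightarrow> ('a \<Rightarrow> 'a \<Rightarrow> bool) \<Rightarrow> 'a \<Rightarrow> nat" where
  "deg V E v = card {w\<in>V. E v w}"

definition regular :: "'a set \<Rightarrow> ('a \<Rightarrow> 'a \<Rightarrow> bool) \<Rightarrow> nat \<Rightarrow> bool" where
  "regular V E k \<longleftrightarrow> (\<forall>v\<in>V. deg V E v = k)"

definition arcs :: "'a set \<Rightarrow> ('a \<Rightarrow> 'a \<Rightarrow> bool) \<Rightarrow> ('a \<times> 'a) set" where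
  "arcs V E = {(u,v). u \<in> V \<and> v \<in> V \<and> E u v}"

definition arc_weight :: "'a set \<Rightarrow> ('a \<Rightarrow> 'a \<Rightarrow> bool) \<Rightarrow> real \<Rightarrow> real \<Rightarrow> 'a \<times> 'a \<Rightarrow> 'a \<times> 'a \<Rightarrow> real" where
  "arc_weight V E a b f e =
     (if f = (snd e, fst e) then (2 / real (deg V E (snd f)) - 1) * a
      else if snd f = fst e then (2 / real (deg V E (snd f)) - 1) * a + b
      else 0)"

text \<open>x0-cycles of length r: lists of r arcs, consecutive, closed, starting at x0 (backtracking allowed).\<close>
definition x0_cycles :: "'a set \<Rightarrow> ('a \<Rightarrow> 'a \<Rightarrow> bool) \<Rightarrow> 'a \<Rightarrow> nat \<Rightarrow> ('a \<times> 'a) list set" where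
  "x0_cycles V E x0 r = {cs. length cs = r \<and> r \<ge> 1 \<and> set cs \<subseteq> arcs V E
      \<and> (\<forall>i. i + 1 < r \<longrightarrow> snd (cs ! i) = fst (cs ! (i + 1)))
      \<and> snd (cs ! (r - 1)) = fst (cs ! 0) \<and> fst (cs ! 0) = x0}"

definition cycle_weight :: "'a set \<Rightarrow> ('a \<Rightarrow> 'a \<Rightarrow> bool) \<Rightarrow> real \<Rightarrow> real \<Rightarrow> ('a \<times> 'a) list \<Rightarrow> real" where
  "cycle_weight V E a b cs =
     (\<Prod>i<length cs. arc_weight V E a b (cs ! i) (cs ! ((i + 1) mod length cs)))"

definition N0 :: "'a set \<Rightarrow> ('a \<Rightarrow> 'a \<Rightarrow> bool) \<Rightarrow> real \<Rightarrow> real \<Rightarrow> 'a \<Rightarrow> nat \<Rightarrow> real" where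
  "N0 V E a b x0 r = (\<Sum>C\<in>x0_cycles V E x0 r. cycle_weight V E a b C)"

definition zeta_ab :: "'a set \<Rightarrow> ('a \<Rightarrow> 'a \<Rightarrow> bool) \<Rightarrow> real \<Rightarrow> real \<Rightarrow> 'a \<Rightarrow> complex \<Rightarrow> complex" where
  "zeta_ab V E a b x0 u =
     exp (\<Sum>r. complex_of_real (N0 V E a b x0 (Suc r) / real (Suc r)) * u ^ Suc r)"

definition vlist :: "'a set \<Rightarrow> 'a list" where
  "vlist V = (SOME vs. distinct vs \<and> set vs = V)"

definition vmat :: "'a set \<Rightarrow> ('a \<Rightarrow> 'a \<Rightarrow> real) \<Rightarrow> real mat" where
  "vmat V M = mat (card V) (card V) (\<lambda>(i,j). M (vlist V ! i) (vlist V ! j))"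

definition Pmat :: "'a set \<Rightarrow> ('a \<Rightarrow> 'a \<Rightarrow> bool) \<Rightarrow> real mat" where
  "Pmat V E = vmat V (\<lambda>u v. if E u v then 1 / real (deg V E u) else 0)"

definition Lapmat :: "'a set \<Rightarrow> ('a \<Rightarrow> 'a \<Rightarrow> bool) \<Rightarrow> real mat" where
  "Lapmat V E = vmat V (\<lambda>u v. (if u = v then real (deg V E u) else 0) - (if E u v then 1 else 0))"

definition spec_sum :: "real mat \<Rightarrow> (complex \<Rightarrow> complex) \<Rightarrow> complex" where
  "spec_sum M f = (let p = char_poly (map_mat complex_of_real M) in
     \<Sum>z\<in>{z. poly p z = 0}. of_nat (order z p) * f z)"

end

(* Let W be the matrix of arc weights, W_ef = w(e,f), indexed by the 2m arcs. On a (q+1)-regular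
   graph W = c S T - b J with c = (2/(q+1) - 1) a + b, where T is the n x 2m incidence matrix of arc
   origins, S the 2m x n incidence matrix of arc termini and J the arc reversal; T S = A, J^2 = I,
   tr J = 0 and T J S = (q+1) I.

   Closed walks of length r have total weight tr W^r, and vertex transitivity shares it equally among
   the n vertices, so N^0_r = tr W^r / n and, near u = 0, zeta^{-1} = exp((1/n) sum log(1 - mu u))
   over the eigenvalues mu of W. Two block eliminations of [I, T; c u S, I + b u J] give the
   Bass-type identity
     det(I - uW) (1 - b^2 u^2)^n = (1 - b^2 u^2)^m det((1 + sigma u^2) I - eta u P),
   and taking logarithms, which is legitimate near u = 0 where every factor is close to 1, yields the
   first formula. The second follows from Delta = (q+1)(I - P). *)

theory Submission
  imports Defs "Jordan_Normal_Form.Schur_Decomposition"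
begin

section \<open>Traces, triangular forms and eigenvalues\<close>

definition mat_trace :: "'a::comm_ring_1 mat \<Rightarrow> 'a" where
  "mat_trace A = (\<Sum>i<dim_row A. A $$ (i,i))"

lemma mat_trace_mult_comm:
  fixes A B :: "'a::comm_ring_1 mat"
  assumes "A \<in> carrier_mat n k" and "B \<in> carrier_mat k n"
  shows "mat_trace (A * B) = mat_trace (B * A)"
proof -
  have "mat_trace (A * B) = (\<Sum>i<n. \<Sum>j<k. A $$ (i,j) * B $$ (j,i))"
    using assms by (simp add: mat_trace_def scalar_prod_def atLeast0LessThan)
  also have "\<dots> = (\<Sum>j<k. \<Sum>i<n. B $$ (j,i) * A $$ (i,j))"
    by (subst sum.swap) (simp add: mult.commute)
  also have "\<dots> = mat_trace (B * A)"
    using assms by (simp add: mat_trace_def scalar_prod_def atLeast0LessThan)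
  finally show ?thesis .
qed

lemma mat_trace_similar:
  fixes A :: "'a::comm_ring_1 mat"
  assumes "similar_mat_wit A B P Q"
  shows "mat_trace A = mat_trace B"
proof -
  note sim = similar_mat_witD[OF refl assms]
  have "mat_trace A = mat_trace ((P * B) * Q)"
    using sim(3) by simp
  also have "\<dots> = mat_trace (Q * (P * B))"
    using sim(5-7) by (intro mat_trace_mult_comm) auto
  also have "Q * (P * B) = B"
    using sim(2,5-7) by (simp add: assoc_mult_mat[symmetric, of Q _ _ P _ B])
  finally show ?thesis .
qed

lemma pow_mat_Suc_left:
  fixes A :: "'a::semiring_1 mat"
  assumes A: "A \<in> carrier_mat n n"
  shows "A ^\<^sub>m Suc k = A * A ^\<^sub>m k"
proof (induction k)
  case (Suc k)
  have "A ^\<^sub>m Suc (Suc k) = (A * A ^\<^sub>m k) * A"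
    using Suc by simp
  also have "\<dots> = A * A ^\<^sub>m Suc k"
    using A by (simp add: assoc_mult_mat[of _ n n _ n _ n])
  finally show ?case .
qed (use A in simp)

lemma upper_triangular_mult:
  fixes A B :: "'a::comm_ring_1 mat"
  assumes A: "A \<in> carrier_mat n n" and B: "B \<in> carrier_mat n n"
    and uA: "upper_triangular A" and uB: "upper_triangular B"
  shows "upper_triangular (A * B)"
    and "i < n \<Longrightarrow> (A * B) $$ (i,i) = A $$ (i,i) * B $$ (i,i)"
proof -
  have below_diagonal: "A $$ (i,k) * B $$ (k,j) = 0" if "j < i" "i < n" "k < n" for i j k
    using that A B upper_triangularD[OF uA, of k i] upper_triangularD[OF uB, of j k]
    by (cases "k < i") auto
  show "upper_triangular (A * B)"
    using A B by (auto intro!: upper_triangularI sum.neutral simp: scalar_prod_def below_diagonal)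
  assume i: "i < n"
  have off_diagonal: "A $$ (i,k) * B $$ (k,i) = 0" if "k < n" "k \<noteq> i" for k
    using that i A B upper_triangularD[OF uA, of k i] upper_triangularD[OF uB, of i k]
    by (cases "k < i") auto
  have "(A * B) $$ (i,i) = (\<Sum>k\<in>{0..<n}. A $$ (i,k) * B $$ (k,i))"
    using A B i by (simp add: scalar_prod_def)
  also have "\<dots> = A $$ (i,i) * B $$ (i,i)"
    using i off_diagonal by (subst sum.remove[of _ i]) (auto intro!: sum.neutral)
  finally show "(A * B) $$ (i,i) = A $$ (i,i) * B $$ (i,i)" .
qed

lemma upper_triangular_pow:
  fixes A :: "'a::comm_ring_1 mat"
  assumes A: "A \<in> carrier_mat n n" and uA: "upper_triangular A"
  shows "upper_triangular (A ^\<^sub>m k)" and "i < n \<Longrightarrow> (A ^\<^sub>m k) $$ (i,i) = A $$ (i,i) ^ k"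
proof -
  have "upper_triangular (A ^\<^sub>m k) \<and> (\<forall>i<n. (A ^\<^sub>m k) $$ (i,i) = A $$ (i,i) ^ k)"
  proof (induction k)
    case (Suc k)
    then show ?case
      using upper_triangular_mult[OF pow_carrier_mat[OF A] A _ uA, of k] by simp
  qed (use A in simp)
  then show "upper_triangular (A ^\<^sub>m k)" and "i < n \<Longrightarrow> (A ^\<^sub>m k) $$ (i,i) = A $$ (i,i) ^ k"
    by auto
qed

lemma similar_mat_wit_affine:
  fixes A :: "'a::comm_ring_1 mat"
  assumes A: "A \<in> carrier_mat n n" and sim: "similar_mat_wit A B P Q"
  shows "similar_mat_wit (x \<cdot>\<^sub>m 1\<^sub>m n - y \<cdot>\<^sub>m A) (x \<cdot>\<^sub>m 1\<^sub>m n - y \<cdot>\<^sub>m B) P Q"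
proof -
  note w = similar_mat_witD2[OF A sim]
  have "P * (x \<cdot>\<^sub>m 1\<^sub>m n - y \<cdot>\<^sub>m B) = P * (x \<cdot>\<^sub>m 1\<^sub>m n) - P * (y \<cdot>\<^sub>m B)"
    by (rule mult_minus_distrib_mat[of P n n]) (use w in auto)
  also have "\<dots> = x \<cdot>\<^sub>m P - y \<cdot>\<^sub>m (P * B)"
    using w(5-7) mult_smult_distrib[of P n n "1\<^sub>m n" n x] by (simp add: mult_smult_distrib[of P n n])
  finally have "P * (x \<cdot>\<^sub>m 1\<^sub>m n - y \<cdot>\<^sub>m B) * Q = (x \<cdot>\<^sub>m P - y \<cdot>\<^sub>m (P * B)) * Q"
    by simp
  also have "\<dots> = (x \<cdot>\<^sub>m P) * Q - (y \<cdot>\<^sub>m (P * B)) * Q"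
    by (rule minus_mult_distrib_mat[of _ n n]) (use w in auto)
  also have "\<dots> = x \<cdot>\<^sub>m (P * Q) - y \<cdot>\<^sub>m (P * B * Q)"
    using w(5-7) by (simp add: mult_smult_assoc_mat[of _ n n])
  finally have "x \<cdot>\<^sub>m 1\<^sub>m n - y \<cdot>\<^sub>m A = P * (x \<cdot>\<^sub>m 1\<^sub>m n - y \<cdot>\<^sub>m B) * Q"
    using w(1,3) by simp
  then show ?thesis
    using w by (intro similar_mat_witI[OF w(1,2)]) auto
qed

lemma upper_triangular_affine:
  fixes B :: "'a::comm_ring_1 mat"
  assumes B: "B \<in> carrier_mat n n" and uB: "upper_triangular B"
  shows "upper_triangular (x \<cdot>\<^sub>m 1\<^sub>m n - y \<cdot>\<^sub>m B)"
    and "i < n \<Longrightarrow> (x \<cdot>\<^sub>m 1\<^sub>m n - y \<cdot>\<^sub>m B) $$ (i,i) = x - y * B $$ (i,i)"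
  using B upper_triangularD[OF uB] by (auto intro!: upper_triangularI)

lemma complex_char_poly_splits:
  fixes A :: "complex mat"
  assumes "A \<in> carrier_mat n n"
  obtains e where "char_poly A = (\<Prod>i<n. [:- e i, 1:])"
proof -
  obtain es where es: "char_poly A = (\<Prod>a\<leftarrow>es. [:- a, 1:])" "length es = n"
    using char_poly_factorized[OF assms] by blast
  then have "char_poly A = (\<Prod>i<n. [:- (es ! i), 1:])"
    by (simp add: prod.list_conv_set_nth atLeast0LessThan)
  then show ?thesis by (rule that)
qed

lemma prod_lessThan_conv_prod_list_upt: "(\<Prod>i<n. f i) = (\<Prod>i\<leftarrow>[0..<n]. f i)"
  by (simp add: prod.distinct_set_conv_list[symmetric] atLeast0LessThan)

lemma prod_list_map_diag_mat:
  assumes "M \<in> carrier_mat n n"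
  shows "(\<Prod>a\<leftarrow>diag_mat M. f a) = (\<Prod>i<n. f (M $$ (i,i)))"
  using assms by (simp add: diag_mat_def prod_lessThan_conv_prod_list_upt o_def)

lemma similar_upper_triangular_eigenvalues:
  fixes A :: "complex mat"
  assumes A: "A \<in> carrier_mat n n" and e: "char_poly A = (\<Prod>i<n. [:- e i, 1:])"
  obtains B P Q where "similar_mat_wit A B P Q" and "upper_triangular B" and "B \<in> carrier_mat n n"
    and "\<And>i. i < n \<Longrightarrow> B $$ (i,i) = e i"
proof -
  have cp: "char_poly A = (\<Prod>a\<leftarrow>map e [0..<n]. [:- a, 1:])"
    using e by (simp add: prod_lessThan_conv_prod_list_upt o_def)
  obtain B P Q where "schur_decomposition A (map e [0..<n]) = (B, P, Q)"
    by (cases "schur_decomposition A (map e [0..<n])") auto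
  from schur_decomposition[OF A cp this]
  have sim: "similar_mat_wit A B P Q" and uB: "upper_triangular B"
    and diag: "diag_mat B = map e [0..<n]"
    by auto
  have B: "B \<in> carrier_mat n n" using similar_mat_witD2[OF A sim] by auto
  have "B $$ (i,i) = e i" if "i < n" for i
    using arg_cong[OF diag, of "\<lambda>xs. xs ! i"] that B by (simp add: diag_mat_def)
  then show ?thesis using that sim uB B by blast
qed

lemma mat_trace_pow_eigenvalues:
  fixes A :: "complex mat"
  assumes A: "A \<in> carrier_mat n n" and e: "char_poly A = (\<Prod>i<n. [:- e i, 1:])"
  shows "mat_trace (A ^\<^sub>m k) = (\<Sum>i<n. e i ^ k)"
proof -
  obtain B P Q where sim: "similar_mat_wit A B P Q" and uB: "upper_triangular B"
    and B: "B \<in> carrier_mat n n" and diag: "\<And>i. i < n \<Longrightarrow> B $$ (i,i) = e i"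
    using similar_upper_triangular_eigenvalues[OF A e] by blast
  have "mat_trace (A ^\<^sub>m k) = mat_trace (B ^\<^sub>m k)"
    by (rule mat_trace_similar[OF similar_mat_wit_pow[OF sim]])
  also have "\<dots> = (\<Sum>i<n. e i ^ k)"
    using B diag upper_triangular_pow(2)[OF B uB] by (simp add: mat_trace_def)
  finally show ?thesis .
qed

lemma det_affine_eigenvalues:
  fixes A :: "complex mat"
  assumes A: "A \<in> carrier_mat n n" and e: "char_poly A = (\<Prod>i<n. [:- e i, 1:])"
  shows "det (x \<cdot>\<^sub>m 1\<^sub>m n - y \<cdot>\<^sub>m A) = (\<Prod>i<n. x - y * e i)"
proof -
  obtain B P Q where sim: "similar_mat_wit A B P Q" and uB: "upper_triangular B"
    and B: "B \<in> carrier_mat n n" and diag: "\<And>i. i < n \<Longrightarrow> B $$ (i,i) = e i"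
    using similar_upper_triangular_eigenvalues[OF A e] by blast
  have "det (x \<cdot>\<^sub>m 1\<^sub>m n - y \<cdot>\<^sub>m A) = det (x \<cdot>\<^sub>m 1\<^sub>m n - y \<cdot>\<^sub>m B)"
    by (rule det_similar) (use similar_mat_wit_affine[OF A sim] in \<open>auto simp: similar_mat_def\<close>)
  also have "\<dots> = (\<Prod>i<n. x - y * e i)"
    using B diag upper_triangular_affine[OF B uB]
    by (subst det_upper_triangular[of _ n]) (auto simp: prod_list_diag_prod atLeast0LessThan)
  finally show ?thesis .
qed

lemma char_poly_affine_eigenvalues:
  fixes A :: "complex mat"
  assumes A: "A \<in> carrier_mat n n" and e: "char_poly A = (\<Prod>i<n. [:- e i, 1:])"
  shows "char_poly (x \<cdot>\<^sub>m 1\<^sub>m n - y \<cdot>\<^sub>m A) = (\<Prod>i<n. [:- (x - y * e i), 1:])"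
proof -
  obtain B P Q where sim: "similar_mat_wit A B P Q" and uB: "upper_triangular B"
    and B: "B \<in> carrier_mat n n" and diag: "\<And>i. i < n \<Longrightarrow> B $$ (i,i) = e i"
    using similar_upper_triangular_eigenvalues[OF A e] by blast
  let ?B' = "x \<cdot>\<^sub>m 1\<^sub>m n - y \<cdot>\<^sub>m B"
  have "char_poly (x \<cdot>\<^sub>m 1\<^sub>m n - y \<cdot>\<^sub>m A) = char_poly ?B'"
    by (rule char_poly_similar)
      (use similar_mat_wit_affine[OF A sim] in \<open>auto simp: similar_mat_def\<close>)
  also have "\<dots> = (\<Prod>a\<leftarrow>diag_mat ?B'. [:- a, 1:])"
    using B upper_triangular_affine(1)[OF B uB] by (intro char_poly_upper_triangular) auto
  also have "\<dots> = (\<Prod>i<n. [:- (?B' $$ (i,i)), 1:])"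
    using B by (intro prod_list_map_diag_mat) auto
  also have "\<dots> = (\<Prod>i<n. [:- (x - y * e i), 1:])"
    using diag upper_triangular_affine(2)[OF B uB] by simp
  finally show ?thesis .
qed

lemma prod_one_minus_signs:
  fixes s :: "'i \<Rightarrow> 'a::{comm_ring_1, ring_char_0}"
  assumes I: "finite I" and sign: "\<And>i. i \<in> I \<Longrightarrow> s i = 1 \<or> s i = -1"
    and balanced: "(\<Sum>i\<in>I. s i) = 0"
  shows "(\<Prod>i\<in>I. 1 - t * s i) = (1 - t^2) ^ (card I div 2)" and "even (card I)"
proof -
  define Ip where "Ip = {i\<in>I. s i = 1}"
  define Im where "Im = {i\<in>I. s i \<noteq> 1}"
  have fin: "finite Ip" "finite Im" and split: "I = Ip \<union> Im" "Ip \<inter> Im = {}"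
    using I by (auto simp: Ip_def Im_def)
  have plus: "\<And>i. i \<in> Ip \<Longrightarrow> s i = 1" and minus: "\<And>i. i \<in> Im \<Longrightarrow> s i = -1"
    using sign by (auto simp: Ip_def Im_def)
  have "(\<Sum>i\<in>I. s i) = of_nat (card Ip) - of_nat (card Im)"
    unfolding split(1) using fin split(2) plus minus by (simp add: sum.union_disjoint)
  then have card_eq: "card Ip = card Im"
    using balanced by simp
  have "(\<Prod>i\<in>I. 1 - t * s i) = (1 - t) ^ card Ip * (1 + t) ^ card Im"
    unfolding split(1) using fin split(2) plus minus by (simp add: prod.union_disjoint)
  also have "\<dots> = (1 - t^2) ^ card Ip"
    by (simp add: card_eq power_mult_distrib[symmetric] power2_eq_square algebra_simps)
  finally show "(\<Prod>i\<in>I. 1 - t * s i) = (1 - t^2) ^ (card I div 2)" and "even (card I)"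
    using card_Un_disjoint[OF fin split(2)] card_eq split(1) by simp_all
qed

lemma det_one_minus_involution:
  fixes J :: "complex mat"
  assumes J: "J \<in> carrier_mat n n" and JJ: "J * J = 1\<^sub>m n" and tr: "mat_trace J = 0"
  shows "det (1\<^sub>m n - t \<cdot>\<^sub>m J) = (1 - t^2) ^ (n div 2)" and "even n"
proof -
  obtain e where e: "char_poly J = (\<Prod>i<n. [:- e i, 1:])"
    using complex_char_poly_splits[OF J] by blast
  obtain B P Q where sim: "similar_mat_wit J B P Q" and uB: "upper_triangular B"
    and B: "B \<in> carrier_mat n n" and diag: "\<And>i. i < n \<Longrightarrow> B $$ (i,i) = e i"
    using similar_upper_triangular_eigenvalues[OF J e] by blast
  have "B ^\<^sub>m 2 \<in> carrier_mat n n"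
    using B by simp
  note sim2 = similar_mat_witD2[OF this similar_mat_wit_sym[OF similar_mat_wit_pow[OF sim, of 2]]]
  have "B ^\<^sub>m 2 = Q * J ^\<^sub>m 2 * P"
    by (fact sim2(3))
  moreover have "Q * P = 1\<^sub>m n"
    by (fact sim2(1))
  moreover have "J ^\<^sub>m 2 = 1\<^sub>m n"
    using J JJ by (simp add: numeral_2_eq_2)
  ultimately have B2: "B ^\<^sub>m 2 = 1\<^sub>m n"
    using sim2(6,7) by simp
  have sign: "e i = 1 \<or> e i = -1" if "i < n" for i
    using upper_triangular_pow(2)[OF B uB that, of 2] B2 diag that by (simp add: power2_eq_1_iff)
  have "(\<Sum>i<n. e i) = 0"
    using mat_trace_pow_eigenvalues[OF J e, of 1] J tr by simp
  then have "(\<Prod>i<n. 1 - t * e i) = (1 - t^2) ^ (n div 2)" and "even n"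
    using prod_one_minus_signs[where I="{..<n}" and s=e] sign by auto
  moreover have "1\<^sub>m n - t \<cdot>\<^sub>m J = 1 \<cdot>\<^sub>m 1\<^sub>m n - t \<cdot>\<^sub>m J"
    using J by (intro eq_matI) auto
  ultimately show "det (1\<^sub>m n - t \<cdot>\<^sub>m J) = (1 - t^2) ^ (n div 2)" and "even n"
    using det_affine_eigenvalues[OF J e, of 1 t] by simp_all
qed

lemma involution_factorization:
  fixes J :: "'a::comm_ring_1 mat"
  assumes J: "J \<in> carrier_mat n n" and JJ: "J * J = 1\<^sub>m n"
  shows "(1\<^sub>m n - t \<cdot>\<^sub>m J) * (1\<^sub>m n + t \<cdot>\<^sub>m J) = (1 - t^2) \<cdot>\<^sub>m 1\<^sub>m n"
proof -
  have "J * (1\<^sub>m n + t \<cdot>\<^sub>m J) = J * 1\<^sub>m n + J * (t \<cdot>\<^sub>m J)"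
    by (rule mult_add_distrib_mat[of _ n n]) (use J in auto)
  also have "\<dots> = J + t \<cdot>\<^sub>m 1\<^sub>m n"
    using J JJ mult_smult_distrib[of J n n J n t] by simp
  finally have JL: "J * (1\<^sub>m n + t \<cdot>\<^sub>m J) = J + t \<cdot>\<^sub>m 1\<^sub>m n" .
  have "(1\<^sub>m n - t \<cdot>\<^sub>m J) * (1\<^sub>m n + t \<cdot>\<^sub>m J)
      = 1\<^sub>m n * (1\<^sub>m n + t \<cdot>\<^sub>m J) - (t \<cdot>\<^sub>m J) * (1\<^sub>m n + t \<cdot>\<^sub>m J)"
    by (rule minus_mult_distrib_mat[of _ n n]) (use J in auto)
  also have "\<dots> = (1\<^sub>m n + t \<cdot>\<^sub>m J) - t \<cdot>\<^sub>m (J + t \<cdot>\<^sub>m 1\<^sub>m n)"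
    using J JL mult_smult_assoc_mat[of J n n "1\<^sub>m n + t \<cdot>\<^sub>m J" n t] by simp
  also have "\<dots> = (1 - t^2) \<cdot>\<^sub>m 1\<^sub>m n"
    using J by (intro eq_matI) (auto simp: algebra_simps power2_eq_square)
  finally show ?thesis .
qed

(* Multiply [1, T; S, K] on the right by [1, -T; 0, 1] and by [d 1, 0; -L S, 1]. *)
lemma det_weinstein_aronszajn:
  fixes K L :: "'a::idom mat"
  assumes K: "K \<in> carrier_mat N N" and L: "L \<in> carrier_mat N N"
    and S: "S \<in> carrier_mat N n" and T: "T \<in> carrier_mat n N"
    and KL: "K * L = d \<cdot>\<^sub>m 1\<^sub>m N"
  shows "det (K - S * T) * d ^ n = det (d \<cdot>\<^sub>m 1\<^sub>m n - T * (L * S)) * det K"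
proof -
  let ?M = "four_block_mat (1\<^sub>m n) T S K"
  let ?R1 = "four_block_mat (1\<^sub>m n) (- T) (0\<^sub>m N n) (1\<^sub>m N)"
  let ?R2 = "four_block_mat (d \<cdot>\<^sub>m 1\<^sub>m n) (0\<^sub>m n N) (- (L * S)) (1\<^sub>m N)"
  have M: "?M \<in> carrier_mat (n + N) (n + N)"
    using K S T by auto
  have "?M * ?R1 = four_block_mat (1\<^sub>m n) (0\<^sub>m n N) S (K - S * T)"
    using K S T by (subst mult_four_block_mat[of _ n n T N S N K]) (auto intro!: eq_matI)
  moreover have "det ?R1 = 1"
    using T by (subst det_four_block_mat_lower_left_zero[of _ n _ N]) auto
  moreover have "det (four_block_mat (1\<^sub>m n) (0\<^sub>m n N) S (K - S * T)) = det (K - S * T)"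
    using K S T by (subst det_four_block_mat_upper_right_zero[of _ n _ N]) auto
  ultimately have "det ?M = det (K - S * T)"
    using det_mult[OF M, of ?R1] by simp
  moreover have "?M * ?R2 = four_block_mat (d \<cdot>\<^sub>m 1\<^sub>m n - T * (L * S)) T (0\<^sub>m N n) K"
  proof -
    have "K * (L * S) = d \<cdot>\<^sub>m S"
      using K L S KL
      by (simp add: assoc_mult_mat[symmetric, of K N N L N S n] mult_smult_assoc_mat[of _ N N])
    then show ?thesis
      using K L S T by (subst mult_four_block_mat[of _ n n T N S N K]) (auto intro!: eq_matI)
  qed
  moreover have "det ?R2 = d ^ n"
    using L S by (subst det_four_block_mat_upper_right_zero[of _ n _ N]) (auto simp: det_smult)
  moreover have "det (four_block_mat (d \<cdot>\<^sub>m 1\<^sub>m n - T * (L * S)) T (0\<^sub>m N n) K)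
      = det (d \<cdot>\<^sub>m 1\<^sub>m n - T * (L * S)) * det K"
    using K L S T by (subst det_four_block_mat_lower_left_zero[of _ n _ N]) auto
  ultimately show ?thesis
    using det_mult[OF M, of ?R2] L S by simp
qed

lemma order_prod_linear_factors:
  fixes z :: "'a::idom"
  shows "Polynomial.order z (\<Prod>a\<leftarrow>es. [:- a, 1:]) = count_list es z"
proof (induction es)
  case Nil
  then show ?case by (simp add: order_0I)
next
  case (Cons a es)
  have "(\<Prod>a\<leftarrow>es. [:- a, 1:]) \<noteq> 0"
    by (auto simp: prod_list_zero_iff)
  then have "Polynomial.order z ([:- a, 1:] * (\<Prod>a\<leftarrow>es. [:- a, 1:]))
      = Polynomial.order z [:- a, 1:] + Polynomial.order z (\<Prod>a\<leftarrow>es. [:- a, 1:])"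
    by (intro order_mult no_zero_divisors) simp_all
  moreover have "Polynomial.order z [:- a, 1:] = (if z = a then 1 else 0)"
    using order_power_n_n[of a 1] by (auto intro: order_0I)
  ultimately show ?case
    using Cons by simp
qed

lemma sum_list_map_eq_sum_count_list:
  fixes f :: "'a \<Rightarrow> 'b::comm_semiring_1"
  shows "(\<Sum>x\<leftarrow>xs. f x) = (\<Sum>x\<in>set xs. of_nat (count_list xs x) * f x)"
proof (induction xs)
  case (Cons x xs)
  have "(\<Sum>y\<in>set (x # xs). of_nat (count_list (x # xs) y) * f y)
      = (\<Sum>y\<in>insert x (set xs). (if x = y then f y else 0) + of_nat (count_list xs y) * f y)"
    by (intro sum.cong) (auto simp: algebra_simps)
  also have "\<dots> = f x + (\<Sum>y\<in>set xs. of_nat (count_list xs y) * f y)"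
    by (cases "x \<in> set xs") (auto simp: sum.distrib insert_absorb count_list_0_iff)
  finally show ?case
    using Cons by simp
qed simp

lemma sum_roots_prod_linear_factors:
  fixes es :: "'a::idom list" and g :: "'a \<Rightarrow> 'b::comm_semiring_1"
  defines "p \<equiv> (\<Prod>a\<leftarrow>es. [:- a, 1:])"
  shows "(\<Sum>z\<in>{z. poly p z = 0}. of_nat (Polynomial.order z p) * g z) = (\<Sum>a\<leftarrow>es. g a)"
proof -
  have "{z. poly p z = 0} = set es"
    unfolding p_def by (induction es) auto
  then show ?thesis
    by (simp add: p_def order_prod_linear_factors sum_list_map_eq_sum_count_list)
qed

lemma spec_sum_eigenvalues:
  fixes e :: "nat \<Rightarrow> complex"
  assumes "char_poly (map_mat complex_of_real M) = (\<Prod>i<n. [:- e i, 1:])"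
  shows "spec_sum M g = (\<Sum>i<n. g (e i))"
proof -
  have cp: "char_poly (map_mat complex_of_real M) = (\<Prod>a\<leftarrow>map e [0..<n]. [:- a, 1:])"
    using assms by (simp add: prod_lessThan_conv_prod_list_upt o_def)
  show ?thesis
    unfolding spec_sum_def Let_def cp sum_roots_prod_linear_factors
    by (simp add: interv_sum_list_conv_sum_set_nat atLeast0LessThan)
qed

section \<open>Matrices indexed by finite sets\<close>

lemma
  assumes "finite X"
  shows distinct_vlist: "distinct (vlist X)" and set_vlist: "set (vlist X) = X"
    and length_vlist: "length (vlist X) = card X"
proof -
  have "distinct (vlist X) \<and> set (vlist X) = X"
    unfolding vlist_def using finite_distinct_list[OF assms]
    by (metis (mono_tags, lifting) someI_ex)
  then show "distinct (vlist X)" and "set (vlist X) = X" and "length (vlist X) = card X"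
    using distinct_card by fastforce+
qed

lemma vlist_nth_mem: "finite X \<Longrightarrow> i < card X \<Longrightarrow> vlist X ! i \<in> X"
  using set_vlist length_vlist nth_mem by metis

lemma vlist_nth_eq_iff:
  "finite X \<Longrightarrow> i < card X \<Longrightarrow> j < card X \<Longrightarrow> vlist X ! i = vlist X ! j \<longleftrightarrow> i = j"
  using distinct_vlist length_vlist nth_eq_iff_index_eq by metis

lemma sum_vlist:
  assumes "finite X"
  shows "(\<Sum>i<card X. g (vlist X ! i)) = (\<Sum>x\<in>X. g x)"
proof -
  have "(\<Sum>x\<in>X. g x) = (\<Sum>x\<leftarrow>vlist X. g x)"
    using distinct_vlist[OF assms] set_vlist[OF assms] by (metis sum.distinct_set_conv_list)
  also have "\<dots> = (\<Sum>i<card X. g (vlist X ! i))"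
    using length_vlist[OF assms] by (simp add: sum_list_sum_nth atLeast0LessThan)
  finally show ?thesis ..
qed

definition indexed_mat :: "'a set \<Rightarrow> 'b set \<Rightarrow> ('a \<Rightarrow> 'b \<Rightarrow> 'c) \<Rightarrow> 'c mat" where
  "indexed_mat X Y f = mat (card X) (card Y) (\<lambda>(i,j). f (vlist X ! i) (vlist Y ! j))"

lemma indexed_mat_carrier [simp]: "indexed_mat X Y f \<in> carrier_mat (card X) (card Y)"
  and dim_row_indexed_mat [simp]: "dim_row (indexed_mat X Y f) = card X"
  and dim_col_indexed_mat [simp]: "dim_col (indexed_mat X Y f) = card Y"
  by (simp_all add: indexed_mat_def)

lemma index_indexed_mat [simp]:
  "i < card X \<Longrightarrow> j < card Y \<Longrightarrow> indexed_mat X Y f $$ (i,j) = f (vlist X ! i) (vlist Y ! j)"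
  by (simp add: indexed_mat_def)

lemma vmat_eq_indexed_mat: "vmat V M = indexed_mat V V M"
  by (simp add: vmat_def indexed_mat_def)

lemma indexed_mat_cong:
  assumes "finite X" and "finite Y" and "\<And>x y. x \<in> X \<Longrightarrow> y \<in> Y \<Longrightarrow> f x y = g x y"
  shows "indexed_mat X Y f = indexed_mat X Y g"
  using assms by (intro eq_matI) (auto simp: vlist_nth_mem)

lemma one_mat_eq_indexed_mat:
  assumes "finite X"
  shows "1\<^sub>m (card X) = indexed_mat X X (\<lambda>x y. if x = y then 1 else 0)"
  using assms by (intro eq_matI) (auto simp: vlist_nth_eq_iff)

lemma smult_indexed_mat: "c \<cdot>\<^sub>m indexed_mat X Y f = indexed_mat X Y (\<lambda>x y. c * f x y)"
  by (intro eq_matI) auto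

lemma add_indexed_mat:
  "indexed_mat X Y f + indexed_mat X Y g = indexed_mat X Y (\<lambda>x y. f x y + g x y)"
  by (intro eq_matI) auto

lemma minus_indexed_mat:
  "indexed_mat X Y f - indexed_mat X Y g = indexed_mat X Y (\<lambda>x y. f x y - g x y)"
  by (intro eq_matI) auto

lemma map_mat_indexed_mat: "map_mat h (indexed_mat X Y f) = indexed_mat X Y (\<lambda>x y. h (f x y))"
  by (intro eq_matI) auto

lemma indexed_mat_mult:
  assumes "finite Y"
  shows "indexed_mat X Y f * indexed_mat Y Z g = indexed_mat X Z (\<lambda>x z. \<Sum>y\<in>Y. f x y * g y z)"
proof (rule eq_matI)
  fix i j assume i: "i < dim_row (indexed_mat X Z (\<lambda>x z. \<Sum>y\<in>Y. f x y * g y z))"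
    and j: "j < dim_col (indexed_mat X Z (\<lambda>x z. \<Sum>y\<in>Y. f x y * g y z))"
  then have "(indexed_mat X Y f * indexed_mat Y Z g) $$ (i,j)
      = (\<Sum>k<card Y. f (vlist X ! i) (vlist Y ! k) * g (vlist Y ! k) (vlist Z ! j))"
    by (simp add: scalar_prod_def atLeast0LessThan)
  also have "\<dots> = (\<Sum>y\<in>Y. f (vlist X ! i) y * g y (vlist Z ! j))"
    by (rule sum_vlist[OF assms])
  finally show "(indexed_mat X Y f * indexed_mat Y Z g) $$ (i,j)
      = indexed_mat X Z (\<lambda>x z. \<Sum>y\<in>Y. f x y * g y z) $$ (i,j)"
    using i j by simp
qed auto

lemma mat_trace_indexed_mat:
  assumes "finite X"
  shows "mat_trace (indexed_mat X X f) = (\<Sum>x\<in>X. f x x)"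
  using sum_vlist[OF assms, of "\<lambda>x. f x x"] by (simp add: mat_trace_def)

fun walk_weight :: "('a \<Rightarrow> 'a \<Rightarrow> 'b::comm_semiring_1) \<Rightarrow> 'a \<Rightarrow> 'a list \<Rightarrow> 'a \<Rightarrow> 'b" where
  "walk_weight f x [] y = f x y"
| "walk_weight f x (z # zs) y = f x z * walk_weight f z zs y"

lemma walk_weight_conv_prod:
  "walk_weight f x zs y = (\<Prod>i<Suc (length zs). f ((x # zs) ! i) ((zs @ [y]) ! i))"
proof (induction zs arbitrary: x)
  case (Cons z zs)
  then show ?case
    by (subst prod.lessThan_Suc_shift) simp
qed simp

lemma closed_walk_weight_conv_prod:
  "walk_weight f x zs x
    = (\<Prod>i<Suc (length zs). f ((x # zs) ! i) ((x # zs) ! ((i + 1) mod Suc (length zs))))"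
  unfolding walk_weight_conv_prod
proof (rule prod.cong)
  fix i assume "i \<in> {..<Suc (length zs)}"
  then have "(zs @ [x]) ! i = (x # zs) ! ((i + 1) mod Suc (length zs))"
    by (cases "i = length zs") (auto simp: nth_append)
  then show "f ((x # zs) ! i) ((zs @ [x]) ! i)
      = f ((x # zs) ! i) ((x # zs) ! ((i + 1) mod Suc (length zs)))"
    by simp
qed simp

lemma sum_lists_length_Suc:
  "(\<Sum>xs\<in>{xs. set xs \<subseteq> X \<and> length xs = Suc r}. h xs)
    = (\<Sum>x\<in>X. \<Sum>xs\<in>{xs. set xs \<subseteq> X \<and> length xs = r}. h (x # xs))"
  (is "_ = (\<Sum>x\<in>X. \<Sum>xs\<in>?L. h (x # xs))")
proof -
  have "(\<Sum>xs\<in>{xs. set xs \<subseteq> X \<and> length xs = Suc r}. h xs) = (\<Sum>(xs, x)\<in>?L \<times> X. h (x # xs))"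
    unfolding lists_length_Suc_eq by (subst sum.reindex[OF inj_split_Cons]) (auto intro!: sum.cong)
  also have "\<dots> = (\<Sum>xs\<in>?L. \<Sum>x\<in>X. h (x # xs))"
    by (rule sum.cartesian_product[symmetric])
  also have "\<dots> = (\<Sum>x\<in>X. \<Sum>xs\<in>?L. h (x # xs))"
    by (rule sum.swap)
  finally show ?thesis .
qed

lemma indexed_mat_pow_Suc:
  assumes X: "finite X"
  shows "indexed_mat X X f ^\<^sub>m Suc r
    = indexed_mat X X (\<lambda>x y. \<Sum>zs\<in>{zs. set zs \<subseteq> X \<and> length zs = r}. walk_weight f x zs y)"
proof (induction r)
  case 0
  have "{zs. set zs \<subseteq> X \<and> length zs = 0} = {[]}"
    by auto
  then show ?case
    by simp
next
  case (Suc r)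
  then show ?case
    using X by (simp add: pow_mat_Suc_left[of _ "card X"] indexed_mat_mult sum_lists_length_Suc
        sum_distrib_left del: pow_mat.simps)
qed

lemma mat_trace_indexed_mat_pow:
  assumes X: "finite X"
  shows "mat_trace (indexed_mat X X f ^\<^sub>m Suc r)
    = (\<Sum>cs\<in>{cs. set cs \<subseteq> X \<and> length cs = Suc r}. \<Prod>i<Suc r. f (cs ! i) (cs ! ((i + 1) mod Suc r)))"
    (is "_ = ?closed_walks")
proof -
  have "mat_trace (indexed_mat X X f ^\<^sub>m Suc r)
      = (\<Sum>x\<in>X. \<Sum>zs\<in>{zs. set zs \<subseteq> X \<and> length zs = r}. walk_weight f x zs x)"
    using X by (simp add: indexed_mat_pow_Suc mat_trace_indexed_mat del: pow_mat.simps)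
  also have "\<dots> = (\<Sum>x\<in>X. \<Sum>zs\<in>{zs. set zs \<subseteq> X \<and> length zs = r}.
      \<Prod>i<Suc r. f ((x # zs) ! i) ((x # zs) ! ((i + 1) mod Suc r)))"
    by (intro sum.cong refl) (auto simp: closed_walk_weight_conv_prod)
  also have "\<dots> = ?closed_walks"
    by (rule sum_lists_length_Suc[symmetric])
  finally show ?thesis .
qed

section \<open>Logarithms\<close>

lemma sums_minus_Ln_one_minus:
  fixes z :: complex
  assumes "norm z < 1"
  shows "(\<lambda>r. z ^ Suc r / of_nat (Suc r)) sums (- Ln (1 - z))"
proof -
  have "(\<lambda>r. z ^ r / of_nat r) sums (- Ln (1 - z))"
    using sums_minus[OF Ln_series[of "- z"]] assms by (simp add: power_minus')
  then show ?thesis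
    using sums_Suc_iff[of "\<lambda>r. z ^ r / of_nat r"] by simp
qed

lemma zeta_ab_eq_exp_sum_Ln:
  fixes \<mu> :: "nat \<Rightarrow> complex"
  assumes N0: "\<And>r. complex_of_real (N0 V E a b x0 (Suc r)) = (\<Sum>i<k. \<mu> i ^ Suc r) / of_nat n"
    and small: "\<And>i. i < k \<Longrightarrow> norm (\<mu> i * u) < 1"
  shows "zeta_ab V E a b x0 u = exp (- (\<Sum>i<k. Ln (1 - \<mu> i * u)) / of_nat n)"
proof -
  have "complex_of_real (N0 V E a b x0 (Suc r) / real (Suc r)) * u ^ Suc r
      = (\<Sum>i<k. (\<mu> i * u) ^ Suc r / of_nat (Suc r)) / of_nat n" for r
  proof -
    have "(\<Sum>i<k. (\<mu> i * u) ^ Suc r / of_nat (Suc r))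
        = (\<Sum>i<k. \<mu> i ^ Suc r) * (u ^ Suc r / of_nat (Suc r))"
      by (simp only: sum_distrib_right sum_divide_distrib power_mult_distrib times_divide_eq_right)
    then show ?thesis
      by (simp add: N0 divide_inverse mult_ac)
  qed
  moreover have "(\<lambda>r. (\<Sum>i<k. (\<mu> i * u) ^ Suc r / of_nat (Suc r)) / of_nat n)
      sums ((\<Sum>i<k. - Ln (1 - \<mu> i * u)) / of_nat n)"
    using small by (intro sums_divide sums_sum sums_minus_Ln_one_minus) auto
  ultimately show ?thesis
    unfolding zeta_ab_def by (simp add: sums_iff sum_negf)
qed

lemma eventually_eq_0_if_exp_eq_1:
  fixes H :: "'a \<Rightarrow> complex"
  assumes lim: "(H \<longlongrightarrow> 0) F" and exp: "\<forall>\<^sub>F x in F. exp (H x) = 1"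
  shows "\<forall>\<^sub>F x in F. H x = 0"
proof -
  have "\<forall>\<^sub>F x in F. norm (H x) < 2 * pi"
    using tendsto_norm[OF lim] by (intro order_tendstoD(2)) auto
  then show ?thesis
    using exp
  proof eventually_elim
    case (elim x)
    then obtain k :: int where "Re (H x) = 0" and im: "Im (H x) = of_int (2 * k) * pi"
      by (auto simp: exp_eq_1)
    moreover have "\<bar>Im (H x)\<bar> < 2 * pi"
      using abs_Im_le_cmod[of "H x"] elim(1) by linarith
    then have "k = 0"
      using im pi_gt_zero by (simp add: abs_mult)
    ultimately show ?case
      by (simp add: complex_eq_iff)
  qed
qed

lemma eventually_sum_Ln_eq:
  fixes f g :: "nat \<Rightarrow> 'a \<Rightarrow> complex" and h :: "'a \<Rightarrow> complex"
  assumes f: "\<And>i. i < k \<Longrightarrow> (f i \<longlongrightarrow> 1) F" and g: "\<And>j. j < l \<Longrightarrow> (g j \<longlongrightarrow> 1) F"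
    and h: "(h \<longlongrightarrow> 1) F"
    and prod: "\<And>x. (\<Prod>i<k. f i x) * h x ^ p = h x ^ p' * (\<Prod>j<l. g j x)"
  shows "\<forall>\<^sub>F x in F. (\<Sum>i<k. Ln (f i x)) = (of_nat p' - of_nat p) * Ln (h x) + (\<Sum>j<l. Ln (g j x))"
proof -
  define H where
    "H x = ((\<Sum>i<k. Ln (f i x)) + of_nat p * Ln (h x)) - (of_nat p' * Ln (h x) + (\<Sum>j<l. Ln (g j x)))"
    for x
  have Ln: "((\<lambda>x. Ln (\<phi> x)) \<longlongrightarrow> 0) F" if "(\<phi> \<longlongrightarrow> 1) F" for \<phi> :: "'a \<Rightarrow> complex"
    using tendsto_Ln[OF that] by simp
  have "(H \<longlongrightarrow> ((\<Sum>i<k. 0) + of_nat p * 0) - (of_nat p' * 0 + (\<Sum>j<l. 0))) F"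
    unfolding H_def by (intro tendsto_intros Ln f g h) auto
  then have "(H \<longlongrightarrow> 0) F"
    by simp
  moreover have "\<forall>\<^sub>F x in F. (\<forall>i\<in>{..<k}. f i x \<noteq> 0) \<and> (\<forall>j\<in>{..<l}. g j x \<noteq> 0) \<and> h x \<noteq> 0"
    using f g h
    by (intro eventually_conj eventually_ball_finite ballI tendsto_imp_eventually_ne) auto
  then have "\<forall>\<^sub>F x in F. exp (H x) = 1"
  proof eventually_elim
    case (elim x)
    then have "exp (H x) = ((\<Prod>i<k. f i x) * h x ^ p) / (h x ^ p' * (\<Prod>j<l. g j x))"
      by (simp add: H_def exp_diff exp_add exp_sum exp_of_nat_mult)
    also have "\<dots> = 1"
      using elim by (simp add: prod)
    finally show ?case .
  qed
  ultimately have "\<forall>\<^sub>F x in F. H x = 0"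
    by (rule eventually_eq_0_if_exp_eq_1)
  then show ?thesis
    by eventually_elim (simp add: H_def algebra_simps)
qed

section \<open>Closed walks and graph automorphisms\<close>

definition graph_automorphism :: "'a set \<Rightarrow> ('a \<Rightarrow> 'a \<Rightarrow> bool) \<Rightarrow> ('a \<Rightarrow> 'a) \<Rightarrow> bool" where
  "graph_automorphism V E h \<longleftrightarrow> bij_betw h V V \<and> (\<forall>u\<in>V. \<forall>v\<in>V. E u v \<longleftrightarrow> E (h u) (h v))"

lemma vertex_transitive_automorphism:
  assumes "vertex_transitive V E" and "x \<in> V" and "y \<in> V"
  obtains h where "graph_automorphism V E h" and "h x = y"
  using assms unfolding vertex_transitive_def graph_automorphism_def by blast

lemma graph_automorphism_inv:
  assumes "graph_automorphism V E h"
  shows "graph_automorphism V E (inv_into V h)"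
proof -
  have h: "bij_betw h V V" and E: "\<forall>u\<in>V. \<forall>v\<in>V. E u v \<longleftrightarrow> E (h u) (h v)"
    using assms by (auto simp: graph_automorphism_def)
  have "bij_betw (inv_into V h) V V"
    using h by (rule bij_betw_inv_into)
  moreover have "E u v \<longleftrightarrow> E (inv_into V h u) (inv_into V h v)" if "u \<in> V" "v \<in> V" for u v
    using E that h bij_betw_inv_into_right[OF h] bij_betwE[OF calculation]
    by metis
  ultimately show ?thesis
    by (simp add: graph_automorphism_def)
qed

lemma deg_automorphism:
  assumes "graph_automorphism V E h" and "v \<in> V"
  shows "deg V E (h v) = deg V E v"
proof -
  have h: "bij_betw h V V" and E: "\<forall>u\<in>V. \<forall>v\<in>V. E u v \<longleftrightarrow> E (h u) (h v)"
    using assms(1) by (auto simp: graph_automorphism_def)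
  have "{w\<in>V. E (h v) w} = h ` {w\<in>V. E v w}"
  proof (intro equalityI subsetI)
    fix w assume w: "w \<in> {w\<in>V. E (h v) w}"
    then obtain w' where "w' \<in> V" and "w = h w'"
      using bij_betw_imp_surj_on[OF h] by blast
    then show "w \<in> h ` {w\<in>V. E v w}"
      using w E assms(2) by auto
  qed (use E assms(2) bij_betwE[OF h] in auto)
  moreover have "inj_on h {w\<in>V. E v w}"
    using h by (auto simp: bij_betw_def intro: inj_on_subset)
  ultimately show ?thesis
    by (simp add: deg_def card_image)
qed

lemma arc_automorphism:
  assumes "graph_automorphism V E h" and "e \<in> arcs V E"
  shows "map_prod h h e \<in> arcs V E"
  using assms by (auto simp: graph_automorphism_def arcs_def intro: bij_betw_apply)

lemma arc_weight_automorphism: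
  assumes h: "graph_automorphism V E h" and e: "e \<in> arcs V E" and f: "f \<in> arcs V E"
  shows "arc_weight V E a b (map_prod h h f) (map_prod h h e) = arc_weight V E a b f e"
proof -
  have inj: "inj_on h V"
    using h by (simp add: graph_automorphism_def bij_betw_def)
  obtain u v where "e = (u, v)" "u \<in> V" "v \<in> V"
    using e by (auto simp: arcs_def)
  moreover obtain u' v' where "f = (u', v')" "u' \<in> V" "v' \<in> V"
    using f by (auto simp: arcs_def)
  ultimately show ?thesis
    using deg_automorphism[OF h] inj_onD[OF inj] by (auto simp: arc_weight_def)
qed

lemma cycle_weight_automorphism:
  assumes h: "graph_automorphism V E h" and cs: "set cs \<subseteq> arcs V E"
  shows "cycle_weight V E a b (map (map_prod h h) cs) = cycle_weight V E a b cs"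
  unfolding cycle_weight_def
proof (intro prod.cong)
  fix i assume "i \<in> {..<length cs}"
  then have i: "i < length cs"
    by simp
  then have j: "(i + 1) mod length cs < length cs"
    by (intro mod_less_divisor) linarith
  have "cs ! i \<in> arcs V E" and "cs ! ((i + 1) mod length cs) \<in> arcs V E"
    using cs i j by (auto dest: nth_mem)
  then show "arc_weight V E a b (map (map_prod h h) cs ! i)
        (map (map_prod h h) cs ! ((i + 1) mod length (map (map_prod h h) cs)))
      = arc_weight V E a b (cs ! i) (cs ! ((i + 1) mod length cs))"
    using arc_weight_automorphism[OF h] i j by simp
qed simp

lemma x0_cycles_automorphism:
  assumes h: "graph_automorphism V E h" and cs: "cs \<in> x0_cycles V E x R"
  shows "map (map_prod h h) cs \<in> x0_cycles V E (h x) R"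
proof -
  have "R \<ge> 1" and "length cs = R"
    using cs by (auto simp: x0_cycles_def)
  then show ?thesis
    using cs arc_automorphism[OF h] by (auto simp: x0_cycles_def map_prod_def split_beta)
qed

lemma N0_automorphism:
  assumes h: "graph_automorphism V E h" and x: "x \<in> V"
  shows "N0 V E a b (h x) R = N0 V E a b x R"
proof -
  define g where "g = inv_into V h"
  have g: "graph_automorphism V E g"
    unfolding g_def using h by (rule graph_automorphism_inv)
  have gh: "g (h v) = v" and hg: "h (g v) = v" if "v \<in> V" for v
    using h that unfolding g_def graph_automorphism_def
    by (auto simp: bij_betw_inv_into_left bij_betw_inv_into_right)
  have inverse: "map (map_prod g g) (map (map_prod h h) cs) = cs"
    and inverse': "map (map_prod h h) (map (map_prod g g) cs) = cs"
    if "set cs \<subseteq> arcs V E" for cs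
    using that gh hg by (auto simp: arcs_def map_idI map_prod_def split_beta intro!: map_idI)
  have "bij_betw (map (map_prod h h)) (x0_cycles V E x R) (x0_cycles V E (h x) R)"
  proof (rule bij_betw_byWitness[where f' = "map (map_prod g g)"])
    show "map (map_prod h h) ` x0_cycles V E x R \<subseteq> x0_cycles V E (h x) R"
      using x0_cycles_automorphism[OF h] by blast
    show "map (map_prod g g) ` x0_cycles V E (h x) R \<subseteq> x0_cycles V E x R"
      using x0_cycles_automorphism[OF g] gh[OF x] by force
  qed (use inverse inverse' in \<open>auto simp: x0_cycles_def\<close>)
  then have "N0 V E a b (h x) R
      = (\<Sum>cs\<in>x0_cycles V E x R. cycle_weight V E a b (map (map_prod h h) cs))"
    unfolding N0_def by (rule sum.reindex_bij_betw[symmetric])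
  also have "\<dots> = N0 V E a b x R"
    unfolding N0_def
    by (intro sum.cong refl cycle_weight_automorphism[OF h]) (simp add: x0_cycles_def)
  finally show ?thesis .
qed

lemma N0_vertex_transitive:
  assumes "vertex_transitive V E" and "x \<in> V" and "y \<in> V"
  shows "N0 V E a b y R = N0 V E a b x R"
  using vertex_transitive_automorphism[OF assms] N0_automorphism assms(2) by metis

lemma cycle_weight_eq_0:
  assumes "length cs = R" and "i < R" and "snd (cs ! i) \<noteq> fst (cs ! ((i + 1) mod R))"
  shows "cycle_weight V E a b cs = 0"
proof -
  have "arc_weight V E a b (cs ! i) (cs ! ((i + 1) mod R)) = 0"
    using assms(3) by (auto simp: arc_weight_def)
  then show ?thesis
    unfolding cycle_weight_def using assms(1,2) by (intro prod_zero) auto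
qed

lemma x0_cycles_eq:
  assumes R: "R \<ge> 1"
  shows "x0_cycles V E x R = {cs. set cs \<subseteq> arcs V E \<and> length cs = R \<and> fst (cs ! 0) = x
    \<and> (\<forall>i<R. snd (cs ! i) = fst (cs ! ((i + 1) mod R)))}"
proof -
  have successor: "(i + 1) mod R = (if i + 1 < R then i + 1 else 0)" if "i < R" for i
  proof (cases "i + 1 < R")
    case False
    then have "i + 1 = R"
      using that by simp
    then show ?thesis
      by simp
  qed simp
  have "(\<forall>i<R. snd (cs ! i) = fst (cs ! ((i + 1) mod R)))
      \<longleftrightarrow> (\<forall>i. i + 1 < R \<longrightarrow> snd (cs ! i) = fst (cs ! (i + 1))) \<and> snd (cs ! (R - 1)) = fst (cs ! 0)"
    for cs :: "('a \<times> 'a) list"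
  proof
    assume cyclic: "\<forall>i<R. snd (cs ! i) = fst (cs ! ((i + 1) mod R))"
    show "(\<forall>i. i + 1 < R \<longrightarrow> snd (cs ! i) = fst (cs ! (i + 1))) \<and> snd (cs ! (R - 1)) = fst (cs ! 0)"
      using cyclic[rule_format, of "R - 1"] cyclic[rule_format] R by (simp add: successor)
  next
    assume chain:
      "(\<forall>i. i + 1 < R \<longrightarrow> snd (cs ! i) = fst (cs ! (i + 1))) \<and> snd (cs ! (R - 1)) = fst (cs ! 0)"
    then show "\<forall>i<R. snd (cs ! i) = fst (cs ! ((i + 1) mod R))"
    proof (intro allI impI)
      fix i assume "i < R"
      then consider "i + 1 < R" | "i = R - 1"
        by linarith
      then show "snd (cs ! i) = fst (cs ! ((i + 1) mod R))"
        using \<open>i < R\<close> successor[OF \<open>i < R\<close>] chain by cases auto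
    qed
  qed
  then show ?thesis
    using R by (auto simp: x0_cycles_def)
qed

lemma sum_N0_eq_sum_cycle_weight:
  assumes V: "finite V" and R: "R \<ge> 1"
  shows "(\<Sum>x\<in>V. N0 V E a b x R)
    = (\<Sum>cs\<in>{cs. set cs \<subseteq> arcs V E \<and> length cs = R}. cycle_weight V E a b cs)"
proof -
  define W where "W = {cs. set cs \<subseteq> arcs V E \<and> length cs = R}"
  define C where "C = {cs\<in>W. \<forall>i<R. snd (cs ! i) = fst (cs ! ((i + 1) mod R))}"
  have fin: "finite W"
    unfolding W_def by (rule finite_lists_length_eq)
      (use V in \<open>auto simp: arcs_def intro: finite_subset[of _ "V \<times> V"]\<close>)
  have start: "fst (cs ! 0) \<in> V" if "cs \<in> C" for cs
  proof -
    have "cs ! 0 \<in> set cs"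
      using that R by (simp add: C_def W_def)
    then show ?thesis
      using that by (auto simp: C_def W_def arcs_def)
  qed
  have "(\<Sum>x\<in>V. N0 V E a b x R) = (\<Sum>x\<in>V. \<Sum>cs\<in>{cs\<in>C. fst (cs ! 0) = x}. cycle_weight V E a b cs)"
    unfolding N0_def x0_cycles_eq[OF R] by (intro sum.cong) (auto simp: C_def W_def)
  also have "\<dots> = (\<Sum>cs\<in>C. cycle_weight V E a b cs)"
    using fin V start by (intro sum.group) (auto simp: C_def)
  also have "\<dots> = (\<Sum>cs\<in>W. cycle_weight V E a b cs)"
    using fin by (intro sum.mono_neutral_left) (auto simp: C_def W_def intro: cycle_weight_eq_0)
  finally show ?thesis
    unfolding W_def .
qed

section \<open>The arc matrices of a regular graph\<close>

locale regular_graph =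
  fixes V :: "'v set" and E :: "'v \<Rightarrow> 'v \<Rightarrow> bool" and q :: nat
  assumes simple: "simple_graph V E" and regular: "regular V E (q + 1)"
begin

lemma finite_vertices: "finite V"
  using simple by (simp add: simple_graph_def)

lemma adjacent_sym: "E u v \<Longrightarrow> E v u"
  using simple by (simp add: simple_graph_def)

lemma not_adjacent_self: "\<not> E u u"
  using simple by (simp add: simple_graph_def)

lemma deg_regular: "v \<in> V \<Longrightarrow> deg V E v = q + 1"
  using regular by (simp add: regular_def)

lemma finite_arcs: "finite (arcs V E)"
  using finite_vertices by (auto simp: arcs_def intro: finite_subset[of _ "V \<times> V"])

lemma reverse_arc: "e \<in> arcs V E \<Longrightarrow> (snd e, fst e) \<in> arcs V E"
  using adjacent_sym by (auto simp: arcs_def)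

lemma card_arcs_from: "v \<in> V \<Longrightarrow> card {e\<in>arcs V E. fst e = v} = q + 1"
proof -
  assume v: "v \<in> V"
  have "{e\<in>arcs V E. fst e = v} = Pair v ` {w\<in>V. E v w}"
    using v by (auto simp: arcs_def)
  then show ?thesis
    using deg_regular[OF v] by (simp add: card_image inj_on_def deg_def)
qed

lemma card_arcs: "card (arcs V E) = card V * (q + 1)"
proof -
  have "arcs V E = Sigma V (\<lambda>v. {w\<in>V. E v w})"
    by (auto simp: arcs_def)
  then have "card (arcs V E) = (\<Sum>v\<in>V. deg V E v)"
    using finite_vertices by (simp add: card_SigmaI deg_def)
  then show ?thesis
    by (simp add: deg_regular)
qed

lemma sum_arcs_same:
  fixes g :: "'v \<times> 'v \<Rightarrow> 'a::comm_ring_1"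
  assumes "e \<in> arcs V E"
  shows "(\<Sum>f\<in>arcs V E. (if e = f then 1 else 0) * g f) = g e"
proof -
  have "(\<Sum>f\<in>arcs V E. (if e = f then 1 else 0) * g f) = (\<Sum>f\<in>arcs V E. if e = f then g f else 0)"
    by (intro sum.cong) auto
  then show ?thesis
    using finite_arcs assms by simp
qed

lemma sum_arcs_reverse:
  fixes g :: "'v \<times> 'v \<Rightarrow> 'a::comm_ring_1"
  assumes "e \<in> arcs V E"
  shows "(\<Sum>f\<in>arcs V E. (if e = (snd f, fst f) then 1 else 0) * g f) = g (snd e, fst e)"
proof -
  have "(\<Sum>f\<in>arcs V E. (if e = (snd f, fst f) then 1 else 0) * g f)
      = (\<Sum>f\<in>arcs V E. if f = (snd e, fst e) then g f else 0)"
    by (intro sum.cong) auto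
  then show ?thesis
    using finite_arcs reverse_arc[OF assms] by simp
qed

lemma sum_arcs_from_to:
  assumes "u \<in> V" and "v \<in> V"
  shows "(\<Sum>e\<in>arcs V E. (if fst e = u then 1 else 0) * (if snd e = v then 1 else 0))
    = (if E u v then 1 else (0::'a::comm_ring_1))"
proof -
  have "(\<Sum>e\<in>arcs V E. (if fst e = u then 1 else 0) * (if snd e = v then 1 else 0))
      = (\<Sum>e\<in>arcs V E. if e = (u, v) then 1 else (0::'a))"
    by (intro sum.cong) auto
  then show ?thesis
    using finite_arcs assms by (simp add: arcs_def)
qed

lemma sum_arcs_from_from:
  assumes "u \<in> V"
  shows "(\<Sum>e\<in>arcs V E. (if fst e = u then 1 else 0) * (if fst e = v then 1 else 0))
    = (if u = v then of_nat (q + 1) else (0::'a::comm_ring_1))"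
proof -
  have "(\<Sum>e\<in>arcs V E. (if fst e = u then 1 else 0) * (if fst e = v then 1 else 0))
      = (\<Sum>e\<in>arcs V E. if fst e = u then (if u = v then 1 else 0) else (0::'a))"
    by (intro sum.cong) auto
  also have "\<dots> = (\<Sum>e\<in>{e\<in>arcs V E. fst e = u}. if u = v then 1 else 0)"
    by (intro sum.inter_filter[symmetric] finite_arcs)
  finally show ?thesis
    using card_arcs_from[OF assms] by simp
qed

definition tail_mat :: "complex mat" where
  "tail_mat = indexed_mat V (arcs V E) (\<lambda>v e. if fst e = v then 1 else 0)"

definition head_mat :: "complex mat" where
  "head_mat = indexed_mat (arcs V E) V (\<lambda>e v. if snd e = v then 1 else 0)"

definition reversal_mat :: "complex mat" where
  "reversal_mat = indexed_mat (arcs V E) (arcs V E) (\<lambda>e f. if e = (snd f, fst f) then 1 else 0)"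

definition weight_mat :: "real \<Rightarrow> real \<Rightarrow> complex mat" where
  "weight_mat a b
    = indexed_mat (arcs V E) (arcs V E) (\<lambda>e f. complex_of_real (arc_weight V E a b e f))"

lemma reversal_mat_carrier: "reversal_mat \<in> carrier_mat (card (arcs V E)) (card (arcs V E))"
  by (simp add: reversal_mat_def)

lemma weight_mat_carrier: "weight_mat a b \<in> carrier_mat (card (arcs V E)) (card (arcs V E))"
  by (simp add: weight_mat_def)

lemma reversal_mat_squared: "reversal_mat * reversal_mat = 1\<^sub>m (card (arcs V E))"
proof -
  have "reversal_mat * reversal_mat = indexed_mat (arcs V E) (arcs V E) (\<lambda>e g.
      \<Sum>f\<in>arcs V E. (if e = (snd f, fst f) then 1 else 0) * (if f = (snd g, fst g) then 1 else 0))"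
    by (simp add: reversal_mat_def indexed_mat_mult finite_arcs)
  also have "\<dots> = indexed_mat (arcs V E) (arcs V E) (\<lambda>e g. if e = g then 1 else 0)"
    by (intro indexed_mat_cong finite_arcs) (simp add: sum_arcs_reverse; auto simp: prod_eq_iff)
  finally show ?thesis
    by (simp add: one_mat_eq_indexed_mat[OF finite_arcs])
qed

lemma mat_trace_reversal_mat: "mat_trace reversal_mat = 0"
proof -
  have "e \<noteq> (snd e, fst e)" if "e \<in> arcs V E" for e
    using that not_adjacent_self by (auto simp: arcs_def prod_eq_iff)
  then show ?thesis
    by (simp add: reversal_mat_def mat_trace_indexed_mat finite_arcs)
qed

lemma even_card_arcs: "even (card (arcs V E))"
  by (rule det_one_minus_involution(2)[OF reversal_mat_carrier reversal_mat_squared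
        mat_trace_reversal_mat])

lemma head_mult_tail:
  "head_mat * tail_mat = indexed_mat (arcs V E) (arcs V E) (\<lambda>e f. if snd e = fst f then 1 else 0)"
proof -
  have "(\<Sum>v\<in>V. (if snd e = v then 1 else 0) * (if fst f = v then 1 else 0))
      = (if snd e = fst f then 1 else (0::complex))" if "e \<in> arcs V E" for e f
  proof -
    have "(\<Sum>v\<in>V. (if snd e = v then 1 else 0) * (if fst f = v then 1 else 0))
        = (\<Sum>v\<in>V. if snd e = v then (if snd e = fst f then 1 else 0) else (0::complex))"
      by (intro sum.cong) auto
    moreover have "snd e \<in> V"
      using that by (auto simp: arcs_def)
    ultimately show ?thesis
      using finite_vertices by simp
  qed
  then show ?thesis
    unfolding head_mat_def tail_mat_def indexed_mat_mult[OF finite_vertices]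
    by (intro indexed_mat_cong finite_arcs) auto
qed

lemma tail_mult_twisted_head:
  "tail_mat * ((1\<^sub>m (card (arcs V E)) + t \<cdot>\<^sub>m reversal_mat) * head_mat)
    = indexed_mat V V (\<lambda>u v. (if E u v then 1 else 0) + t * (if u = v then of_nat (q + 1) else 0))"
proof -
  have twisted_head: "(1\<^sub>m (card (arcs V E)) + t \<cdot>\<^sub>m reversal_mat) * head_mat
      = indexed_mat (arcs V E) V
          (\<lambda>e v. (if snd e = v then 1 else 0) + t * (if fst e = v then 1 else 0))"
    unfolding one_mat_eq_indexed_mat[OF finite_arcs] reversal_mat_def head_mat_def
      smult_indexed_mat add_indexed_mat indexed_mat_mult[OF finite_arcs]
    by (intro indexed_mat_cong finite_arcs finite_vertices)
      (simp add: ring_distribs sum.distrib sum_distrib_left[symmetric] mult.assoc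
        sum_arcs_same sum_arcs_reverse)
  show ?thesis
    unfolding twisted_head tail_mat_def indexed_mat_mult[OF finite_arcs]
    by (intro indexed_mat_cong finite_vertices)
      (simp add: ring_distribs sum.distrib sum_distrib_left[symmetric] mult.left_commute
        sum_arcs_from_to sum_arcs_from_from)
qed

lemma one_minus_weight_mat:
  fixes a b :: real and u :: complex
  defines "c \<equiv> (2 / real (q + 1) - 1) * a + b"
  shows "1 \<cdot>\<^sub>m 1\<^sub>m (card (arcs V E)) - u \<cdot>\<^sub>m weight_mat a b
    = (1\<^sub>m (card (arcs V E)) - (- of_real b * u) \<cdot>\<^sub>m reversal_mat)
      - ((u * of_real c) \<cdot>\<^sub>m head_mat) * tail_mat"
proof -
  have weight: "complex_of_real (arc_weight V E a b e f)
      = of_real c * (if snd e = fst f then 1 else 0)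
        - of_real b * (if e = (snd f, fst f) then 1 else 0)"
    if "e \<in> arcs V E" for e f
    using that deg_regular by (auto simp: arc_weight_def c_def arcs_def)
  have scaled_head:
    "((u * of_real c) \<cdot>\<^sub>m head_mat) * tail_mat = (u * of_real c) \<cdot>\<^sub>m (head_mat * tail_mat)"
    by (rule mult_smult_assoc_mat) (auto simp: head_mat_def tail_mat_def)
  show ?thesis
    unfolding scaled_head head_mult_tail weight_mat_def reversal_mat_def
      one_mat_eq_indexed_mat[OF finite_arcs] smult_indexed_mat minus_indexed_mat
    by (intro indexed_mat_cong finite_arcs) (simp add: weight algebra_simps)
qed

lemma map_mat_Pmat:
  "map_mat complex_of_real (Pmat V E)
    = indexed_mat V V (\<lambda>u v. if E u v then 1 / of_nat (q + 1) else 0)"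
  unfolding Pmat_def vmat_eq_indexed_mat map_mat_indexed_mat
  by (intro indexed_mat_cong finite_vertices) (simp add: deg_regular)

lemma map_mat_Pmat_carrier: "map_mat complex_of_real (Pmat V E) \<in> carrier_mat (card V) (card V)"
  by (simp add: map_mat_Pmat)

lemma map_mat_Lapmat:
  "map_mat complex_of_real (Lapmat V E)
    = of_nat (q + 1) \<cdot>\<^sub>m 1\<^sub>m (card V) - of_nat (q + 1) \<cdot>\<^sub>m map_mat complex_of_real (Pmat V E)"
  unfolding Lapmat_def map_mat_Pmat vmat_eq_indexed_mat map_mat_indexed_mat
    one_mat_eq_indexed_mat[OF finite_vertices] smult_indexed_mat minus_indexed_mat
  using of_nat_neq_0[of q, where 'a=complex]
  by (intro indexed_mat_cong finite_vertices) (auto simp: deg_regular not_adjacent_self)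

lemma det_one_minus_weight_mat:
  fixes a b :: real and u :: complex
  defines "\<eta> \<equiv> (1 - real q) * a + b * (real q + 1)"
    and "\<sigma> \<equiv> b * ((1 - real q) * a + b * real q)"
    and "d \<equiv> 1 - of_real (b^2) * u^2"
  shows "det (1 \<cdot>\<^sub>m 1\<^sub>m (card (arcs V E)) - u \<cdot>\<^sub>m weight_mat a b) * d ^ card V
    = d ^ (card (arcs V E) div 2)
      * det ((1 + of_real \<sigma> * u^2) \<cdot>\<^sub>m 1\<^sub>m (card V)
          - (of_real \<eta> * u) \<cdot>\<^sub>m map_mat complex_of_real (Pmat V E))"
proof -
  define N where "N = card (arcs V E)"
  define c where "c = (2 / real (q + 1) - 1) * a + b"
  define t where "t = - of_real b * u"
  define K where "K = 1\<^sub>m N - t \<cdot>\<^sub>m reversal_mat"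
  define L where "L = 1\<^sub>m N + t \<cdot>\<^sub>m reversal_mat"
  define S where "S = (u * of_real c) \<cdot>\<^sub>m head_mat"
  have J: "reversal_mat \<in> carrier_mat N N"
    by (simp add: N_def reversal_mat_def)
  have d: "d = 1 - t^2"
    by (simp add: d_def t_def power_mult_distrib)
  have "det (1 \<cdot>\<^sub>m 1\<^sub>m N - u \<cdot>\<^sub>m weight_mat a b) * d ^ card V = det (K - S * tail_mat) * d ^ card V"
    by (simp add: one_minus_weight_mat N_def K_def S_def c_def t_def)
  also have "\<dots> = det (d \<cdot>\<^sub>m 1\<^sub>m (card V) - tail_mat * (L * S)) * det K"
    using involution_factorization[OF J reversal_mat_squared[folded N_def]]
    using J by (intro det_weinstein_aronszajn[of _ N])
      (auto simp: K_def L_def S_def d head_mat_def tail_mat_def N_def)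
  also have "det K = d ^ (N div 2)"
    using det_one_minus_involution[OF J reversal_mat_squared[folded N_def] mat_trace_reversal_mat]
    by (simp add: K_def d)
  also have "tail_mat * (L * S) = (u * of_real c) \<cdot>\<^sub>m (tail_mat * (L * head_mat))"
  proof -
    have L: "L \<in> carrier_mat N N" and H: "head_mat \<in> carrier_mat N (card V)"
      and T: "tail_mat \<in> carrier_mat (card V) N"
      using J by (auto simp: L_def N_def head_mat_def tail_mat_def)
    have "L * S = (u * of_real c) \<cdot>\<^sub>m (L * head_mat)"
      unfolding S_def using L H by (rule mult_smult_distrib)
    moreover have "L * head_mat \<in> carrier_mat N (card V)"
      using L H by (rule mult_carrier_mat)
    ultimately show ?thesis
      using T by (simp add: mult_smult_distrib)
  qed
  also have "d \<cdot>\<^sub>m 1\<^sub>m (card V) - (u * of_real c) \<cdot>\<^sub>m (tail_mat * (L * head_mat))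
      = (1 + of_real \<sigma> * u^2) \<cdot>\<^sub>m 1\<^sub>m (card V)
        - (of_real \<eta> * u) \<cdot>\<^sub>m map_mat complex_of_real (Pmat V E)"
  proof -
    have \<eta>: "\<eta> = c * (real q + 1)" and \<sigma>: "\<sigma> = b * \<eta> - b^2"
      by (simp_all add: \<eta>_def \<sigma>_def c_def field_simps power2_eq_square)
    have diagonal: "d - u * of_real c * (t * of_nat (q + 1)) = 1 + of_real \<sigma> * u^2"
      by (simp add: d t_def \<sigma> \<eta> algebra_simps power2_eq_square)
    have off_diagonal: "u * of_real c = of_real \<eta> * u * (1 / of_nat (q + 1))"
      using of_nat_neq_0[of q, where 'a=complex] by (simp add: \<eta> field_simps)
    show ?thesis
      unfolding L_def N_def tail_mult_twisted_head map_mat_Pmat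
        one_mat_eq_indexed_mat[OF finite_vertices] smult_indexed_mat minus_indexed_mat
    proof (intro indexed_mat_cong finite_vertices)
      fix x y
      show "d * (if x = y then 1 else 0)
          - u * of_real c * ((if E x y then 1 else 0) + t * (if x = y then of_nat (q + 1) else 0))
        = (1 + of_real \<sigma> * u^2) * (if x = y then 1 else 0)
          - of_real \<eta> * u * (if E x y then 1 / of_nat (q + 1) else 0)"
        using diagonal off_diagonal not_adjacent_self[of x] by (cases "x = y") auto
    qed
  qed
  finally show ?thesis
    by (simp add: N_def mult.commute)
qed

lemma N0_eq_mat_trace:
  assumes "vertex_transitive V E" and "x0 \<in> V"
  shows "complex_of_real (N0 V E a b x0 (Suc r))
    = mat_trace (weight_mat a b ^\<^sub>m Suc r) / of_nat (card V)"
proof -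
  have "mat_trace (weight_mat a b ^\<^sub>m Suc r)
      = of_real (\<Sum>cs\<in>{cs. set cs \<subseteq> arcs V E \<and> length cs = Suc r}. cycle_weight V E a b cs)"
    unfolding weight_mat_def mat_trace_indexed_mat_pow[OF finite_arcs] of_real_sum
    by (intro sum.cong) (auto simp: cycle_weight_def)
  also have "(\<Sum>cs\<in>{cs. set cs \<subseteq> arcs V E \<and> length cs = Suc r}. cycle_weight V E a b cs)
      = (\<Sum>x\<in>V. N0 V E a b x (Suc r))"
    by (rule sum_N0_eq_sum_cycle_weight[symmetric, OF finite_vertices]) simp
  also have "\<dots> = of_nat (card V) * N0 V E a b x0 (Suc r)"
    using N0_vertex_transitive[OF assms(1,2)] by simp
  finally show ?thesis
    using assms(2) finite_vertices by (auto simp: card_gt_0_iff)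
qed

lemma inverse_zeta_ab_eq_exp_sum_Ln:
  assumes vt: "vertex_transitive V E" and x0: "x0 \<in> V"
    and \<mu>: "char_poly (weight_mat a b) = (\<Prod>i<card (arcs V E). [:- \<mu> i, 1:])"
  shows "\<forall>\<^sub>F u in nhds 0. inverse (zeta_ab V E a b x0 u)
    = exp ((\<Sum>i<card (arcs V E). Ln (1 - \<mu> i * u)) / of_nat (card V))"
proof -
  have N0: "complex_of_real (N0 V E a b x0 (Suc r))
      = (\<Sum>i<card (arcs V E). \<mu> i ^ Suc r) / of_nat (card V)" for r
    using N0_eq_mat_trace[OF vt x0] mat_trace_pow_eigenvalues[OF weight_mat_carrier \<mu>]
    by (simp del: pow_mat.simps)
  have "\<forall>\<^sub>F u in nhds 0. \<forall>i\<in>{..<card (arcs V E)}. norm (\<mu> i * u) < 1"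
    using filterlim_ident[of "nhds (0::complex)"]
    by (intro eventually_ball_finite ballI order_tendstoD(2)[of _ 0])
      (auto intro!: tendsto_eq_intros)
  then show ?thesis
  proof eventually_elim
    case (elim u)
    then show ?case
      by (simp add: zeta_ab_eq_exp_sum_Ln[OF N0] exp_minus)
  qed
qed

lemma sum_Ln_weight_eigenvalues:
  fixes a b :: real
  assumes \<mu>: "char_poly (weight_mat a b) = (\<Prod>i<card (arcs V E). [:- \<mu> i, 1:])"
    and \<rho>: "char_poly (map_mat complex_of_real (Pmat V E)) = (\<Prod>i<card V. [:- \<rho> i, 1:])"
  defines "\<eta> \<equiv> (1 - real q) * a + b * (real q + 1)"
    and "\<sigma> \<equiv> b * ((1 - real q) * a + b * real q)"
  shows "\<forall>\<^sub>F u in nhds 0. (\<Sum>i<card (arcs V E). Ln (1 - \<mu> i * u))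
    = (of_nat (card (arcs V E) div 2) - of_nat (card V)) * Ln (1 - of_real (b^2) * u^2)
      + (\<Sum>i<card V. Ln ((1 + of_real \<sigma> * u^2) - of_real \<eta> * u * \<rho> i))"
proof (rule eventually_sum_Ln_eq)
  show "(\<Prod>i<card (arcs V E). 1 - \<mu> i * u) * (1 - of_real (b^2) * u^2) ^ card V
      = (1 - of_real (b^2) * u^2) ^ (card (arcs V E) div 2)
        * (\<Prod>i<card V. (1 + of_real \<sigma> * u^2) - of_real \<eta> * u * \<rho> i)" for u
    using det_one_minus_weight_mat[of u a b]
    unfolding det_affine_eigenvalues[OF weight_mat_carrier \<mu>]
      det_affine_eigenvalues[OF map_mat_Pmat_carrier \<rho>]
    by (simp add: \<eta>_def \<sigma>_def mult.assoc mult.commute[of u])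
qed (use filterlim_ident[of "nhds (0::complex)"] in \<open>auto intro!: tendsto_eq_intros\<close>)

lemma inverse_zeta_ab_spectral_formula:
  fixes a b :: real
  assumes vt: "vertex_transitive V E" and x0: "x0 \<in> V"
    and \<rho>: "char_poly (map_mat complex_of_real (Pmat V E)) = (\<Prod>i<card V. [:- \<rho> i, 1:])"
  defines "\<eta> \<equiv> (1 - real q) * a + b * (real q + 1)"
    and "\<sigma> \<equiv> b * ((1 - real q) * a + b * real q)"
  shows "\<forall>\<^sub>F u in nhds 0. inverse (zeta_ab V E a b x0 u)
    = (1 - of_real (b^2) * u^2) powr complex_of_real ((real q - 1) / 2)
      * exp ((\<Sum>i<card V. Ln ((1 + of_real \<sigma> * u^2) - of_real \<eta> * u * \<rho> i)) / of_nat (card V))"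
proof -
  obtain \<mu> where \<mu>: "char_poly (weight_mat a b) = (\<Prod>i<card (arcs V E). [:- \<mu> i, 1:])"
    using complex_char_poly_splits[OF weight_mat_carrier] by blast
  have n: "card V > 0"
    using x0 finite_vertices card_gt_0_iff by blast
  have "2 * (card (arcs V E) div 2) = card V * (q + 1)"
    using even_card_arcs card_arcs by simp
  then have "2 * of_nat (card (arcs V E) div 2) = (of_nat (card V) * (of_nat q + 1) :: complex)"
    by (metis of_nat_1 of_nat_add of_nat_mult of_nat_numeral)
  then have exponent: "(of_nat (card (arcs V E) div 2) - of_nat (card V)) / of_nat (card V)
      = (complex_of_real ((real q - 1) / 2))"
    using n by (simp add: field_simps)
  have "\<forall>\<^sub>F u in nhds (0::complex). 1 - of_real (b^2) * u^2 \<noteq> 0"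
    using filterlim_ident[of "nhds (0::complex)"]
    by (intro tendsto_imp_eventually_ne[of _ 1]) (auto intro!: tendsto_eq_intros)
  with inverse_zeta_ab_eq_exp_sum_Ln[OF vt x0 \<mu>] sum_Ln_weight_eigenvalues[OF \<mu> \<rho>]
  show ?thesis
  proof eventually_elim
    case (elim u)
    let ?d = "1 - of_real (b^2) * u^2"
    let ?F = "\<lambda>i. (1 + of_real \<sigma> * u^2) - of_real \<eta> * u * \<rho> i"
    have "(\<Sum>i<card (arcs V E). Ln (1 - \<mu> i * u)) / of_nat (card V)
        = (of_nat (card (arcs V E) div 2) - of_nat (card V)) / of_nat (card V) * Ln ?d
          + (\<Sum>i<card V. Ln (?F i)) / of_nat (card V)"
      unfolding elim(2) \<eta>_def \<sigma>_def by (simp add: add_divide_distrib)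
    also have "\<dots> = complex_of_real ((real q - 1) / 2) * Ln ?d
        + (\<Sum>i<card V. Ln (?F i)) / of_nat (card V)"
      by (simp only: exponent)
    finally show ?case
      using elim(1,3) by (simp add: powr_def exp_add)
  qed
qed

end

theorem theorem7:
  fixes V :: "'v set" and E :: "'v \<Rightarrow> 'v \<Rightarrow> bool" and q :: nat and a b :: real and x0 :: 'v
  assumes "simple_graph V E" and "connected_graph V E" and "vertex_transitive V E"
    and "regular V E (q + 1)"
    and "0 \<le> a" and "a \<le> 1"
    and "x0 \<in> V"
  defines "\<eta> \<equiv> (1 - real q) * a + b * (real q + 1)"
    and "\<sigma> \<equiv> b * ((1 - real q) * a + b * real q)"
    and "n \<equiv> card V"
  shows "\<exists>\<epsilon>>0. \<forall>u::complex. norm u < \<epsilon> \<longrightarrow>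
      inverse (zeta_ab V E a b x0 u) =
        (1 - of_real (b^2) * u^2) powr complex_of_real ((real q - 1) / 2)
        * exp (spec_sum (Pmat V E) (\<lambda>z. Ln ((1 + of_real \<sigma> * u^2) - of_real \<eta> * u * z)) / of_nat n)
    \<and> inverse (zeta_ab V E a b x0 u) =
        (1 - of_real (b^2) * u^2) powr complex_of_real ((real q - 1) / 2)
        * exp (spec_sum (Lapmat V E)
            (\<lambda>z. Ln ((1 - of_real \<eta> * u + of_real \<sigma> * u^2) + of_real \<eta> * u / of_nat (q + 1) * z)) / of_nat n)"
proof -
  interpret regular_graph V E q
    using assms(1,4) by unfold_locales
  obtain \<rho> where \<rho>: "char_poly (map_mat complex_of_real (Pmat V E)) = (\<Prod>i<card V. [:- \<rho> i, 1:])"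
    using complex_char_poly_splits[OF map_mat_Pmat_carrier] by blast
  have Lap: "char_poly (map_mat complex_of_real (Lapmat V E))
      = (\<Prod>i<card V. [:- (of_nat (q + 1) - of_nat (q + 1) * \<rho> i), 1:])"
    unfolding map_mat_Lapmat by (rule char_poly_affine_eigenvalues[OF map_mat_Pmat_carrier \<rho>])
  have Laplacian_argument: "(1 - of_real \<eta> * u + of_real \<sigma> * u^2)
        + of_real \<eta> * u / of_nat (q + 1) * (of_nat (q + 1) - of_nat (q + 1) * z)
      = (1 + of_real \<sigma> * u^2) - of_real \<eta> * u * z" for u z :: complex
    using of_nat_neq_0[of q, where 'a=complex] by (simp add: field_simps)
  obtain \<epsilon> where "\<epsilon> > 0" and "\<And>u::complex. dist u 0 < \<epsilon> \<Longrightarrow> inverse (zeta_ab V E a b x0 u)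
      = (1 - of_real (b^2) * u^2) powr complex_of_real ((real q - 1) / 2)
        * exp ((\<Sum>i<card V. Ln ((1 + of_real \<sigma> * u^2) - of_real \<eta> * u * \<rho> i)) / of_nat (card V))"
    using inverse_zeta_ab_spectral_formula[OF assms(3,7) \<rho>]
    unfolding \<eta>_def \<sigma>_def eventually_nhds_metric by blast
  then show ?thesis
    unfolding n_def spec_sum_eigenvalues[OF \<rho>] spec_sum_eigenvalues[OF Lap] Laplacian_argument
    by auto
qed

end
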